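(* Let $n=5$, $x_i=i$ for $i=1,\dots,5$, and $Y_i=\beta_0+\beta_1x_i+\varepsilon_i$ with unknown $\beta_0,\beta_1\in\mathbb{R}$ and $\varepsilon_1,\dots,\varepsilon_5$ i.i.d. with a continuous distribution. Let $s_1<s_2<\cdots<s_{10}$ be the ten slopes $S_{ij}=(Y_i-Y_j)/(x_i-x_j)$, $i<j$, sorted increasingly. Then $$p_4:=P\bigl(\beta_1\in(s_1,s_{10})\wedge s_1+s_9<2s_2\wedge 2s_9<s_2+s_{10}\bigr)=0.$$
   Context: Ties among the slopes occur with probability zero and are ignored. *)

theory Defs
  imports "HOL-Probability.Probability"
begin

text \<open>The ten pairwise slopes (Y i - Y j)/(x i - x j), 1 <= i < j <= 5, with x i = i,
  sorted increasingly; s_k of the paper is element k-1 of this list.\<close>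
definition slopes :: "(nat \<Rightarrow> real) \<Rightarrow> real list" where
  "slopes Y = sort [(Y i - Y j) / (real i - real j). i \<leftarrow> [1..<6], j \<leftarrow> [Suc i..<6]]"

end

theory Submission
  imports Defs
begin

text \<open>With \<open>x\<^sub>i = i\<close> the slope of the chord over \<open>[i, j]\<close> is the mean of the increments
  \<open>Y (k + 1) - Y k\<close>, \<open>i \<le> k < j\<close>, so the smallest and largest slopes are the smallest and
  largest increments. Let \<open>m\<close> be the smallest increment and \<open>x\<close> a neighbouring increment
  that is not the largest one. The slopes \<open>m\<close> and \<open>(m + x)/2\<close> bound the second smallest slope
  by \<open>(m + x)/2\<close>, and \<open>x\<close> with a slope \<open>y \<ge> x\<close> bounds the second largest slope below by \<open>x\<close>;
  hence \<open>2 s\<^sub>2 \<le> s\<^sub>1 + s\<^sub>9\<close>. If there is no such neighbour, the mirror argument at the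
  largest increment gives \<open>s\<^sub>2 + s\<^sub>1\<^sub>0 \<le> 2 s\<^sub>9\<close>. So the event is empty for every
  realisation of the errors.\<close>

lemma sort_nth_le_if_many_le:
  fixes xs :: "'a::linorder list"
  assumes "k < size {#z \<in># mset xs. z \<le> x#}"
  shows "sort xs ! k \<le> x"
proof (rule ccontr)
  let ?s = "sort xs"
  assume "\<not> ?s ! k \<le> x"
  then have above: "\<not> z \<le> x" if "z \<in> set (drop k ?s)" for z
  proof -
    from that obtain i where "k + i < length ?s" "z = ?s ! (k + i)"
      by (force simp: in_set_conv_nth)
    then have "?s ! k \<le> z" by (simp add: sorted_nth_mono)
    with \<open>\<not> ?s ! k \<le> x\<close> show ?thesis by auto
  qed
  have "size {#z \<in># mset xs. z \<le> x#} = length (filter (\<lambda>z. z \<le> x) ?s)"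
    by (metis mset_filter mset_sort size_mset)
  also have "\<dots> = length (filter (\<lambda>z. z \<le> x) (take k ?s))"
    using above by (metis append_Nil2 append_take_drop_id filter_append filter_False)
  also have "\<dots> \<le> k"
    by (metis length_filter_le length_take min.boundedE)
  finally show False using assms by simp
qed

lemma ge_sort_nth_if_many_ge:
  fixes xs :: "'a::linorder list"
  assumes "k < size {#z \<in># mset xs. x \<le> z#}"
  shows "x \<le> sort xs ! (length xs - Suc k)"
proof (rule ccontr)
  let ?s = "sort xs" and ?n = "length xs - Suc k"
  assume "\<not> x \<le> ?s ! ?n"
  then have below: "\<not> x \<le> z" if "z \<in> set (take (Suc ?n) ?s)" for z
  proof -
    from that obtain i where "i \<le> ?n" "i < length ?s" "z = ?s ! i"
      by (metis in_set_conv_nth length_take less_Suc_eq_le min_less_iff_conj nth_take)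
    then have "z \<le> ?s ! ?n" by (simp add: sorted_nth_mono)
    with \<open>\<not> x \<le> ?s ! ?n\<close> show ?thesis by auto
  qed
  have "size {#z \<in># mset xs. x \<le> z#} = length (filter (\<lambda>z. x \<le> z) ?s)"
    by (metis mset_filter mset_sort size_mset)
  also have "\<dots> = length (filter (\<lambda>z. x \<le> z) (drop (Suc ?n) ?s))"
    using below by (metis append_take_drop_id filter_append filter_False self_append_conv2)
  also have "\<dots> \<le> length (drop (Suc ?n) ?s)"
    by (rule length_filter_le)
  also have "\<dots> \<le> k"
    by simp
  finally show False using assms by simp
qed

lemma sort_nth_one_le_max:
  fixes xs :: "'a::linorder list"
  assumes "{#u, v#} \<subseteq># mset xs"
  shows "sort xs ! 1 \<le> max u v"
proof (rule sort_nth_le_if_many_le)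
  have "{#u, v#} \<subseteq># {#z \<in># mset xs. z \<le> max u v#}"
    using multiset_filter_mono[OF assms, of "\<lambda>z. z \<le> max u v"] by simp
  then show "1 < size {#z \<in># mset xs. z \<le> max u v#}"
    by (metis One_nat_def lessI size_add_mset size_mset_mono size_single order.strict_trans2)
qed

lemma min_le_sort_nth_length_minus_2:
  fixes xs :: "'a::linorder list"
  assumes "{#u, v#} \<subseteq># mset xs"
  shows "min u v \<le> sort xs ! (length xs - 2)"
proof -
  have "{#u, v#} \<subseteq># {#z \<in># mset xs. min u v \<le> z#}"
    using multiset_filter_mono[OF assms, of "\<lambda>z. min u v \<le> z"] by simp
  then have "1 < size {#z \<in># mset xs. min u v \<le> z#}"
    by (metis One_nat_def lessI size_add_mset size_mset_mono size_single order.strict_trans2)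
  then show ?thesis
    using ge_sort_nth_if_many_ge by (metis Suc_1 Suc_eq_plus1 diff_diff_left)
qed

lemma sort_nth_zero_le:
  fixes xs :: "'a::linorder list"
  assumes "u \<in> set xs"
  shows "sort xs ! 0 \<le> u"
proof (rule sort_nth_le_if_many_le)
  have "u \<in># {#z \<in># mset xs. z \<le> u#}" using assms by simp
  then show "0 < size {#z \<in># mset xs. z \<le> u#}"
    by (metis gr0I size_eq_0_iff_empty empty_iff set_mset_empty)
qed

lemma le_sort_nth_last:
  fixes xs :: "'a::linorder list"
  assumes "u \<in> set xs"
  shows "u \<le> sort xs ! (length xs - 1)"
proof -
  have "u \<in># {#z \<in># mset xs. u \<le> z#}" using assms by simp
  then have "0 < size {#z \<in># mset xs. u \<le> z#}"
    by (metis gr0I size_eq_0_iff_empty empty_iff set_mset_empty)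
  then show ?thesis using ge_sort_nth_if_many_ge by fastforce
qed

lemma sort_nth_one_le_midpoint:
  fixes xs :: "real list"
  assumes "\<forall>z\<in>set xs. m \<le> z" "{#m, (m + x) / 2#} \<subseteq># mset xs"
    and "{#x, y#} \<subseteq># mset xs" "x \<le> y"
  shows "2 * sort xs ! 1 \<le> sort xs ! 0 + sort xs ! (length xs - 2)"
proof -
  have "m \<in> set xs" "x \<in> set xs"
    using assms(2,3) by (auto dest!: set_mset_mono)
  then have "sort xs ! 0 \<in> set xs"
    by (metis length_greater_0_conv length_sort nth_mem set_sort empty_iff list.set(1))
  then have "sort xs ! 0 = m"
    using assms(1) \<open>m \<in> set xs\<close> by (simp add: order.antisym sort_nth_zero_le)
  moreover have "sort xs ! 1 \<le> (m + x) / 2"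
    using sort_nth_one_le_max[OF assms(2)] assms(1) \<open>x \<in> set xs\<close> by auto
  moreover have "x \<le> sort xs ! (length xs - 2)"
    using min_le_sort_nth_length_minus_2[OF assms(3)] assms(4) by simp
  ultimately show ?thesis by argo
qed

lemma midpoint_le_sort_nth_penultimate:
  fixes xs :: "real list"
  assumes "\<forall>z\<in>set xs. z \<le> M" "{#M, (M + x) / 2#} \<subseteq># mset xs"
    and "{#x, y#} \<subseteq># mset xs" "y \<le> x"
  shows "sort xs ! 1 + sort xs ! (length xs - 1) \<le> 2 * sort xs ! (length xs - 2)"
proof -
  have "M \<in> set xs" "x \<in> set xs"
    using assms(2,3) by (auto dest!: set_mset_mono)
  then have "sort xs ! (length xs - 1) \<in> set xs"
    by (metis diff_less length_greater_0_conv length_sort nth_mem set_sort empty_iff list.set(1)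
        zero_less_one)
  then have "sort xs ! (length xs - 1) = M"
    using assms(1) \<open>M \<in> set xs\<close> le_sort_nth_last order.antisym by blast
  moreover have "(M + x) / 2 \<le> sort xs ! (length xs - 2)"
    using min_le_sort_nth_length_minus_2[OF assms(2)] assms(1) \<open>x \<in> set xs\<close> by auto
  moreover have "sort xs ! 1 \<le> x"
    using sort_nth_one_le_max[OF assms(3)] assms(4) by simp
  ultimately show ?thesis by argo
qed

definition chord_slopes :: "real \<Rightarrow> real \<Rightarrow> real \<Rightarrow> real \<Rightarrow> real list" where
  "chord_slopes a b c d =
     [a, (a + b) / 2, (a + b + c) / 3, (a + b + c + d) / 4, b, (b + c) / 2, (b + c + d) / 3,
      c, (c + d) / 2, d]"

lemma length_chord_slopes [simp]: "length (chord_slopes a b c d) = 10"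
  by (simp add: chord_slopes_def)

definition double_gap :: "real list \<Rightarrow> bool" where
  "double_gap s \<longleftrightarrow> s ! 0 + s ! 8 < 2 * s ! 1 \<and> 2 * s ! 8 < s ! 1 + s ! 9"

lemma slopes_eq_sort_chord_slopes:
  "slopes Y = sort (chord_slopes (Y 2 - Y 1) (Y 3 - Y 2) (Y 4 - Y 3) (Y 5 - Y 4))"
proof -
  have "[(Y i - Y j) / (real i - real j). i \<leftarrow> [1..<6], j \<leftarrow> [Suc i..<6]]
      = chord_slopes (Y 2 - Y 1) (Y 3 - Y 2) (Y 4 - Y 3) (Y 5 - Y 4)"
    unfolding chord_slopes_def by (simp add: upt_rec eval_nat_numeral) (simp add: field_simps)
  then show ?thesis by (simp add: slopes_def)
qed

lemma mset_chord_slopes_rev: "mset (chord_slopes d c b a) = mset (chord_slopes a b c d)"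
  by (simp add: chord_slopes_def ac_simps)

lemma sort_chord_slopes_rev: "sort (chord_slopes d c b a) = sort (chord_slopes a b c d)"
  by (metis mset_chord_slopes_rev properties_for_sort mset_sort sorted_sort)

lemma no_double_gap_if_min_midpoint:
  assumes "m \<le> a" "m \<le> b" "m \<le> c" "m \<le> d" "x \<le> y"
    and "{#m, (m + x) / 2#} \<subseteq># mset (chord_slopes a b c d)"
    and "{#x, y#} \<subseteq># mset (chord_slopes a b c d)"
  shows "\<not> double_gap (sort (chord_slopes a b c d))"
proof -
  have "\<forall>z\<in>set (chord_slopes a b c d). m \<le> z"
    using assms(1-4) by (simp add: chord_slopes_def)
  from sort_nth_one_le_midpoint[OF this assms(6,7,5)] show ?thesis
    by (simp add: double_gap_def)
qed

lemma no_double_gap_if_max_midpoint: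
  assumes "a \<le> M" "b \<le> M" "c \<le> M" "d \<le> M" "y \<le> x"
    and "{#M, (M + x) / 2#} \<subseteq># mset (chord_slopes a b c d)"
    and "{#x, y#} \<subseteq># mset (chord_slopes a b c d)"
  shows "\<not> double_gap (sort (chord_slopes a b c d))"
proof -
  have "\<forall>z\<in>set (chord_slopes a b c d). z \<le> M"
    using assms(1-4) by (simp add: chord_slopes_def)
  from midpoint_le_sort_nth_penultimate[OF this assms(6,7,5)] show ?thesis
    by (simp add: double_gap_def)
qed

lemma no_double_gap_if_first_increment_min:
  assumes "a \<le> b" "a \<le> c" "a \<le> d"
  shows "\<not> double_gap (sort (chord_slopes a b c d))"
proof -
  consider "b \<le> c" | "b \<le> d" | "c \<le> b" "d \<le> b" by linarith
  then show ?thesis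
  proof cases
    case 1
    with assms show ?thesis
      by (intro no_double_gap_if_min_midpoint[of a _ _ _ _ b c]) (simp_all add: chord_slopes_def)
  next
    case 2
    with assms show ?thesis
      by (intro no_double_gap_if_min_midpoint[of a _ _ _ _ b d]) (simp_all add: chord_slopes_def)
  next
    case 3
    \<comment> \<open>the only neighbour of \<open>a\<close> is the largest increment, so work at \<open>b\<close> instead\<close>
    with assms show ?thesis
      by (intro no_double_gap_if_max_midpoint[where M = b and x = c and y = a])
        (simp_all add: chord_slopes_def)
  qed
qed

lemma no_double_gap_if_second_increment_min:
  assumes "b \<le> a" "b \<le> c" "b \<le> d"
  shows "\<not> double_gap (sort (chord_slopes a b c d))"
proof (cases "a \<le> c")
  case True
  with assms show ?thesis
    by (intro no_double_gap_if_min_midpoint[of b _ _ _ _ a c])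
      (simp_all add: chord_slopes_def add.commute[of b a])
next
  case False
  with assms show ?thesis
    by (intro no_double_gap_if_min_midpoint[of b _ _ _ _ c a]) (simp_all add: chord_slopes_def)
qed

lemma sort_chord_slopes_no_double_gap: "\<not> double_gap (sort (chord_slopes a b c d))"
proof -
  consider "a \<le> b" "a \<le> c" "a \<le> d" | "b \<le> a" "b \<le> c" "b \<le> d"
    | "c \<le> a" "c \<le> b" "c \<le> d" | "d \<le> a" "d \<le> b" "d \<le> c"
    by linarith
  then show ?thesis
  proof cases
    case 1
    then show ?thesis by (rule no_double_gap_if_first_increment_min)
  next
    case 2
    then show ?thesis by (rule no_double_gap_if_second_increment_min)
  next
    case 3
    then show ?thesis
      using no_double_gap_if_second_increment_min[where a = d and b = c and c = b and d = a]
      by (simp add: sort_chord_slopes_rev)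
  next
    case 4
    then show ?thesis
      using no_double_gap_if_first_increment_min[where a = d and b = c and c = b and d = a]
      by (simp add: sort_chord_slopes_rev)
  qed
qed

theorem theorem6:
  fixes M :: "'a measure" and \<epsilon> :: "nat \<Rightarrow> 'a \<Rightarrow> real" and \<beta>0 \<beta>1 :: real
  assumes "prob_space M"
    and "prob_space.indep_vars M (\<lambda>_. borel) \<epsilon> {1..5}"
    and "\<forall>i\<in>{1..5}. distr M borel (\<epsilon> i) = distr M borel (\<epsilon> 1)"
    and "\<forall>x. measure M {\<omega> \<in> space M. \<epsilon> 1 \<omega> = x} = 0"
  shows "let E = {\<omega> \<in> space M.
                   let s = slopes (\<lambda>i. \<beta>0 + \<beta>1 * real i + \<epsilon> i \<omega>)
                   in s!0 < \<beta>1 \<and> \<beta>1 < s!9 \<and> s!0 + s!8 < 2 * s!1 \<and> 2 * s!8 < s!1 + s!9}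
         in E \<in> sets M \<and> measure M E = 0"
proof -
  have "\<not> double_gap (slopes Y)" for Y
    unfolding slopes_eq_sort_chord_slopes by (rule sort_chord_slopes_no_double_gap)
  then have "{\<omega> \<in> space M.
          let s = slopes (\<lambda>i. \<beta>0 + \<beta>1 * real i + \<epsilon> i \<omega>)
          in s!0 < \<beta>1 \<and> \<beta>1 < s!9 \<and> s!0 + s!8 < 2 * s!1 \<and> 2 * s!8 < s!1 + s!9} = {}"
    unfolding Let_def double_gap_def by blast
  then show ?thesis
    by (simp only: Let_def) simp
qed

end
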